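(* Let $\mu\in(0,1)$ and let $f$ satisfy $(f_1)$, $(f_2)$, $(f_3)$, $(f_5)$ as in the context. Then the function $a\mapsto m(a)$ is non-increasing on $(0,+\infty)$.
   Context: $I_\mu(x)=|x|^{-\mu}$; $f\in C(\mathbb{R},\mathbb{R})$, $F(t)=\int_0^tf(s)ds$; $\|(-\Delta)^{1/4}u\|_2^2=\frac1{2\pi}\int\int\frac{|u(x)-u(y)|^2}{|x-y|^2}dxdy$; $J(u)=\frac12\|(-\Delta)^{1/4}u\|_2^2-\frac12\int(I_\mu*F(u))F(u)dx$; $S(a)=\{u\in H^{1/2}(\mathbb{R}):\|u\|_2^2=a^2\}$; $P(u)=\|(-\Delta)^{1/4}u\|_2^2+(2-\mu)\int(I_\mu*F(u))F(u)dx-\int(I_\mu*F(u))f(u)u\,dx$; $\mathcal{P}(a)=\{u\in S(a):P(u)=0\}$; $m(a)=\inf_{u\in\mathcal{P}(a)}J(u)$. Conditions: $(f_1)$ $\lim_{t\to0}|f(t)|/|t|^\kappa=0$ for some $\kappa>2-\mu$; $(f_2)$ $\lim_{|t|\to\infty}|f(t)|e^{-\alpha t^2}=0$ for $\alpha>\pi$ and $=+\infty$ for $0<\alpha<\pi$; $(f_3)$ there is $\theta>3-\mu$ with $0<\theta F(t)\le tf(t)$ for $t\ne0$; $(f_5)$ with $\widetilde F(t)=f(t)t-(2-\mu)F(t)$, $\widetilde F(t)/|t|^{3-\mu}$ is non-increasing on $(-\infty,0)$ and non-decreasing on $(0,\infty)$. *)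

theory Defs
  imports "HOL-Analysis.Analysis"
begin

definition primF :: "(real \<Rightarrow> real) \<Rightarrow> real \<Rightarrow> real" where
  "primF f t = (LBINT s=0..t. f s)"

definition gagl_nn :: "(real \<Rightarrow> real) \<Rightarrow> ennreal" where
  "gagl_nn u = (\<integral>\<^sup>+ p. ennreal ((u (fst p) - u (snd p))\<^sup>2 / (fst p - snd p)\<^sup>2) \<partial>(lborel \<Otimes>\<^sub>M lborel))"

text \<open>||(-Delta)^{1/4} u||_2^2 = 1/(2 pi) int int |u x - u y|^2/|x-y|^2 dx dy\<close>
definition frac_seminorm_sq :: "(real \<Rightarrow> real) \<Rightarrow> real" where
  "frac_seminorm_sq u = (1 / (2 * pi)) *
     (\<integral> p. (u (fst p) - u (snd p))\<^sup>2 / (fst p - snd p)\<^sup>2 \<partial>(lborel \<Otimes>\<^sub>M lborel))"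

definition H_half :: "(real \<Rightarrow> real) set" where
  "H_half = {u. u \<in> borel_measurable lborel \<and> integrable lborel (\<lambda>x. (u x)\<^sup>2) \<and> gagl_nn u < \<infinity>}"

text \<open>int (I_mu * G(u)) H(u) dx = int int G(u y) H(u x) / |x-y|^mu dy dx\<close>
definition choq_term :: "real \<Rightarrow> (real \<Rightarrow> real) \<Rightarrow> (real \<Rightarrow> real) \<Rightarrow> real" where
  "choq_term \<mu> G H = (\<integral> p. G (snd p) * H (fst p) / \<bar>fst p - snd p\<bar> powr \<mu> \<partial>(lborel \<Otimes>\<^sub>M lborel))"

definition J_fun :: "real \<Rightarrow> (real \<Rightarrow> real) \<Rightarrow> (real \<Rightarrow> real) \<Rightarrow> real" where
  "J_fun \<mu> f u = frac_seminorm_sq u / 2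
      - choq_term \<mu> (\<lambda>x. primF f (u x)) (\<lambda>x. primF f (u x)) / 2"

definition P_fun :: "real \<Rightarrow> (real \<Rightarrow> real) \<Rightarrow> (real \<Rightarrow> real) \<Rightarrow> real" where
  "P_fun \<mu> f u = frac_seminorm_sq u
      + (2 - \<mu>) * choq_term \<mu> (\<lambda>x. primF f (u x)) (\<lambda>x. primF f (u x))
      - choq_term \<mu> (\<lambda>x. primF f (u x)) (\<lambda>x. f (u x) * u x)"

definition sphere_S :: "real \<Rightarrow> (real \<Rightarrow> real) set" where
  "sphere_S a = {u \<in> H_half. (LINT x|lborel. (u x)\<^sup>2) = a\<^sup>2}"

definition pohozaev_set :: "real \<Rightarrow> (real \<Rightarrow> real) \<Rightarrow> real \<Rightarrow> (real \<Rightarrow> real) set" where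
  "pohozaev_set \<mu> f a = {u \<in> sphere_S a. P_fun \<mu> f u = 0}"

text \<open>m(a) as an extended real infimum (Inf of empty set = +infinity).\<close>
definition m_level :: "real \<Rightarrow> (real \<Rightarrow> real) \<Rightarrow> real \<Rightarrow> ereal" where
  "m_level \<mu> f a = (INF u \<in> pohozaev_set \<mu> f a. ereal (J_fun \<mu> f u))"

end

theory Submission
  imports Defs
begin

(* Fix u in P(a) and b \<ge> a, and consider the dilations w = \<alpha> u((\<alpha> a / b)\<^sup>2 x), which all lie
   on S(b). The seminorm of w is \<alpha>\<^sup>2 times that of u, while every Choquard term is multiplied by
   K \<alpha> powr (2\<mu> - 4) with K = (a / b) powr (2\<mu> - 4) \<ge> 1. By (f3) and (f5) the term built from F
   and F-tilde decays like \<alpha> powr (\<theta> + 3 - \<mu>) as \<alpha> \<rightarrow> 0, so the intermediate value theorem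
   gives \<alpha> in (0, 1] with P(w) = 0. Again by (f5), with c = F-tilde(s) F(t) + F(s) F-tilde(t),
   the map \<tau> \<mapsto> \<tau> powr (2\<mu> - 4) F(\<tau> s) F(\<tau> t) - \<tau>\<^sup>2 c / 2 is non-increasing on (0, 1];
   integrating this against the Riesz kernel gives J(w) \<le> J(u), hence m(b) \<le> m(a). *)

lemma primF_0 [simp]: "primF f 0 = 0"
  by (simp add: primF_def zero_ereal_def)

lemma has_real_derivative_primF:
  assumes "continuous_on UNIV f"
  shows "(primF f has_real_derivative f x) (at x)"
proof -
  define a b where "a = min x 0 - 1" and "b = max x 0 + 1"
  have "((\<lambda>t. LBINT s=ereal 0..t. f s) has_vector_derivative f x) (at x within {a..b})"
    by (rule interval_integral_FTC2) (auto simp: a_def b_def intro: continuous_on_subset[OF assms])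
  moreover have "x \<in> interior {a..b}"
    by (auto simp: a_def b_def)
  ultimately have "((\<lambda>t. LBINT s=0..t. f s) has_vector_derivative f x) (at x)"
    by (metis at_within_interior zero_ereal_def)
  then show ?thesis
    unfolding primF_def[abs_def] has_real_derivative_iff_has_vector_derivative .
qed

lemma continuous_on_primF: "continuous_on UNIV f \<Longrightarrow> continuous_on UNIV (primF f)"
  using has_real_derivative_primF by (meson DERIV_isCont continuous_at_imp_continuous_on)

definition tilde_primF :: "real \<Rightarrow> (real \<Rightarrow> real) \<Rightarrow> real \<Rightarrow> real" where
  "tilde_primF \<mu> f t = f t * t - (2 - \<mu>) * primF f t"

locale choquard_nonlinearity =
  fixes \<mu> \<theta> :: real and f :: "real \<Rightarrow> real"
  assumes mu_less_2: "\<mu> < 2"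
    and cont: "continuous_on UNIV f"
    and theta: "3 - \<mu> < \<theta>"
    and ambrosetti_rabinowitz: "\<And>t. t \<noteq> 0 \<Longrightarrow> 0 < \<theta> * primF f t \<and> \<theta> * primF f t \<le> t * f t"
    and tilde_primF_mono_neg: "\<And>s t. s < t \<Longrightarrow> t < 0 \<Longrightarrow>
      tilde_primF \<mu> f t / \<bar>t\<bar> powr (3 - \<mu>) \<le> tilde_primF \<mu> f s / \<bar>s\<bar> powr (3 - \<mu>)"
    and tilde_primF_mono_pos: "\<And>s t. 0 < s \<Longrightarrow> s < t \<Longrightarrow>
      tilde_primF \<mu> f s / \<bar>s\<bar> powr (3 - \<mu>) \<le> tilde_primF \<mu> f t / \<bar>t\<bar> powr (3 - \<mu>)"
begin

lemma theta_pos: "0 < \<theta>"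
  using mu_less_2 theta by linarith

lemma primF_nonneg: "0 \<le> primF f t"
  using ambrosetti_rabinowitz[of t] theta_pos by (cases "t = 0") (auto simp: zero_less_mult_iff)

lemma theta_primF_le: "\<theta> * primF f t \<le> t * f t"
  using ambrosetti_rabinowitz[of t] by (cases "t = 0") auto

lemma f_mult_nonneg: "0 \<le> f t * t"
  using theta_primF_le[of t] primF_nonneg[of t] theta_pos by (smt (verit) mult.commute mult_nonneg_nonneg)

lemma primF_le_f_mult: "primF f t \<le> f t * t"
proof -
  have "primF f t \<le> \<theta> * primF f t"
    using mu_less_2 theta primF_nonneg[of t] by (simp add: mult_le_cancel_right1)
  then show ?thesis
    using theta_primF_le[of t] by (simp add: mult.commute)
qed

lemma tilde_primF_le: "tilde_primF \<mu> f t \<le> f t * t"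
  using primF_nonneg[of t] mu_less_2 by (simp add: tilde_primF_def)

lemma tilde_primF_nonneg: "0 \<le> tilde_primF \<mu> f t"
proof -
  have "(2 - \<mu>) * primF f t \<le> \<theta> * primF f t"
    using theta primF_nonneg[of t] by (intro mult_right_mono) auto
  then show ?thesis
    using theta_primF_le[of t] by (simp add: tilde_primF_def mult.commute)
qed

lemma primF_dilate_le:
  assumes "0 < \<alpha>" "\<alpha> \<le> 1"
  shows "primF f (\<alpha> * t) \<le> \<alpha> powr \<theta> * primF f t"
proof -
  define h where "h \<tau> = primF f (\<tau> * t) * \<tau> powr (- \<theta>)" for \<tau>
  have "h \<alpha> \<le> h 1"
  proof (rule DERIV_nonneg_imp_increasing_open[OF assms(2)])
    fix \<tau> assume "\<alpha> < \<tau>" "\<tau> < 1"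
    then have \<tau>: "0 < \<tau>" using assms by auto
    have "(h has_real_derivative
        f (\<tau> * t) * t * \<tau> powr (- \<theta>) + primF f (\<tau> * t) * (- \<theta> * \<tau> powr (- \<theta> - 1))) (at \<tau>)"
      unfolding h_def[abs_def]
      by (rule derivative_eq_intros DERIV_chain2[OF has_real_derivative_primF[OF cont]] | use \<tau> in simp)+
    moreover have "f (\<tau> * t) * t * \<tau> powr (- \<theta>) + primF f (\<tau> * t) * (- \<theta> * \<tau> powr (- \<theta> - 1))
        = \<tau> powr (- \<theta> - 1) * ((\<tau> * t) * f (\<tau> * t) - \<theta> * primF f (\<tau> * t))"
      using \<tau> by (simp add: powr_diff algebra_simps)
    moreover have "0 \<le> \<tau> powr (- \<theta> - 1) * ((\<tau> * t) * f (\<tau> * t) - \<theta> * primF f (\<tau> * t))"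
      using theta_primF_le[of "\<tau> * t"] by simp
    ultimately show "\<exists>y. (h has_real_derivative y) (at \<tau>) \<and> 0 \<le> y"
      by auto
  next
    show "continuous_on {\<alpha>..1} h"
      unfolding h_def using assms
      by (intro continuous_intros continuous_on_compose2[OF continuous_on_primF[OF cont]]) auto
  qed
  then show ?thesis
    using assms by (simp add: h_def powr_minus field_simps)
qed

lemma primF_dilate_le_3_minus_mu:
  assumes "0 < \<alpha>" "\<alpha> \<le> 1"
  shows "primF f (\<alpha> * t) \<le> \<alpha> powr (3 - \<mu>) * primF f t"
proof -
  have "\<alpha> powr \<theta> * primF f t \<le> \<alpha> powr (3 - \<mu>) * primF f t"
    using assms theta primF_nonneg by (intro mult_right_mono powr_mono') auto
  then show ?thesis
    using primF_dilate_le[OF assms, of t] by linarith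
qed

lemma tilde_primF_dilate_le:
  assumes "0 < \<alpha>" "\<alpha> \<le> 1"
  shows "tilde_primF \<mu> f (\<alpha> * t) \<le> \<alpha> powr (3 - \<mu>) * tilde_primF \<mu> f t"
proof (cases "t = 0 \<or> \<alpha> = 1")
  case True
  then show ?thesis by (auto simp: tilde_primF_def)
next
  case False
  then have "\<alpha> < 1" "t \<noteq> 0"
    using assms by auto
  then have "tilde_primF \<mu> f (\<alpha> * t) / \<bar>\<alpha> * t\<bar> powr (3 - \<mu>) \<le> tilde_primF \<mu> f t / \<bar>t\<bar> powr (3 - \<mu>)"
    using assms tilde_primF_mono_pos[of "\<alpha> * t" t] tilde_primF_mono_neg[of t "\<alpha> * t"]
    by (cases "0 < t") (auto simp: mult_less_0_iff)
  moreover have "\<bar>\<alpha> * t\<bar> powr (3 - \<mu>) = \<alpha> powr (3 - \<mu>) * \<bar>t\<bar> powr (3 - \<mu>)"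
    using assms by (simp add: abs_mult powr_mult)
  ultimately show ?thesis
    using assms \<open>t \<noteq> 0\<close> by (simp add: divide_le_eq field_simps)
qed

lemma primF_dilate_le_self: "0 < \<alpha> \<Longrightarrow> \<alpha> \<le> 1 \<Longrightarrow> primF f (\<alpha> * t) \<le> primF f t"
  using primF_dilate_le_3_minus_mu[of \<alpha> t] primF_nonneg[of t] mu_less_2
  by (smt (verit) mult_left_le_one_le powr_ge_zero powr_le1)

lemma tilde_primF_dilate_le_self:
  "0 < \<alpha> \<Longrightarrow> \<alpha> \<le> 1 \<Longrightarrow> tilde_primF \<mu> f (\<alpha> * t) \<le> tilde_primF \<mu> f t"
  using tilde_primF_dilate_le[of \<alpha> t] tilde_primF_nonneg[of t] mu_less_2
  by (smt (verit) mult_left_le_one_le powr_ge_zero powr_le1)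

lemma tilde_primF_mult_primF_dilate_le:
  assumes "0 < \<alpha>" "\<alpha> \<le> 1"
  shows "tilde_primF \<mu> f (\<alpha> * s) * primF f (\<alpha> * t) \<le> \<alpha> powr (6 - 2 * \<mu>) * (tilde_primF \<mu> f s * primF f t)"
proof -
  have "tilde_primF \<mu> f (\<alpha> * s) * primF f (\<alpha> * t)
      \<le> (\<alpha> powr (3 - \<mu>) * tilde_primF \<mu> f s) * (\<alpha> powr (3 - \<mu>) * primF f t)"
    by (intro mult_mono tilde_primF_dilate_le[OF assms] primF_dilate_le_3_minus_mu[OF assms])
      (simp_all add: primF_nonneg tilde_primF_nonneg)
  also have "\<dots> = \<alpha> powr ((3 - \<mu>) + (3 - \<mu>)) * (tilde_primF \<mu> f s * primF f t)"
    by (simp only: powr_add mult_ac)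
  finally show ?thesis
    by (simp add: algebra_simps)
qed

lemma borel_measurable_f [measurable]: "f \<in> borel_measurable borel"
  using cont by (rule borel_measurable_continuous_onI)

lemma borel_measurable_primF [measurable]: "primF f \<in> borel_measurable borel"
  using continuous_on_primF[OF cont] by (rule borel_measurable_continuous_onI)

lemma borel_measurable_tilde_primF [measurable]: "tilde_primF \<mu> f \<in> borel_measurable borel"
  unfolding tilde_primF_def[abs_def] by measurable

lemma primF_product_dilate_bound:
  assumes "0 < \<alpha>" "\<alpha> \<le> 1"
  shows "0 \<le> \<alpha> powr (2 * \<mu> - 4) * (primF f (\<alpha> * t1) * primF f (\<alpha> * t2)) - primF f t1 * primF f t2
     + (1 - \<alpha>\<^sup>2) / 2 * (tilde_primF \<mu> f t1 * primF f t2 + primF f t1 * tilde_primF \<mu> f t2)"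
proof -
  define c where "c = tilde_primF \<mu> f t1 * primF f t2 + primF f t1 * tilde_primF \<mu> f t2"
  define L where "L \<tau> = \<tau> powr (2 * \<mu> - 4) * (primF f (\<tau> * t1) * primF f (\<tau> * t2)) - \<tau>\<^sup>2 / 2 * c" for \<tau>
  have "L 1 \<le> L \<alpha>"
  proof (rule DERIV_nonpos_imp_decreasing_open[OF assms(2)])
    fix \<tau> assume "\<alpha> < \<tau>" "\<tau> < 1"
    then have \<tau>: "0 < \<tau>" "\<tau> \<le> 1"
      using assms by auto
    have "(L has_real_derivative
        (2 * \<mu> - 4) * \<tau> powr (2 * \<mu> - 4 - 1) * (primF f (\<tau> * t1) * primF f (\<tau> * t2))
        + \<tau> powr (2 * \<mu> - 4) * (f (\<tau> * t1) * t1 * primF f (\<tau> * t2) + primF f (\<tau> * t1) * (f (\<tau> * t2) * t2))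
        - \<tau> * c) (at \<tau>)" (is "(L has_real_derivative ?L') _")
      unfolding L_def[abs_def]
      by (rule derivative_eq_intros DERIV_chain2[OF has_real_derivative_primF[OF cont]] | use \<tau> in simp)+
    moreover have "?L' = \<tau> powr (2 * \<mu> - 5) * (tilde_primF \<mu> f (\<tau> * t1) * primF f (\<tau> * t2)
        + primF f (\<tau> * t1) * tilde_primF \<mu> f (\<tau> * t2)) - \<tau> * c" (is "_ = \<tau> powr _ * ?S - _")
    proof -
      have "\<tau> powr (2 * \<mu> - 4) = \<tau> * \<tau> powr (2 * \<mu> - 5)"
        using \<tau> by (simp add: powr_mult_base)
      then show ?thesis
        by (simp add: tilde_primF_def algebra_simps)
    qed
    moreover have "\<tau> powr (2 * \<mu> - 5) * ?S \<le> \<tau> * c"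
    proof -
      have "?S \<le> \<tau> powr (6 - 2 * \<mu>) * c"
        using tilde_primF_mult_primF_dilate_le[OF \<tau>, of t1 t2] tilde_primF_mult_primF_dilate_le[OF \<tau>, of t2 t1]
        by (simp add: c_def algebra_simps)
      then have "\<tau> powr (2 * \<mu> - 5) * ?S \<le> \<tau> powr (2 * \<mu> - 5) * (\<tau> powr (6 - 2 * \<mu>) * c)"
        by (rule mult_left_mono) simp
      also have "\<dots> = \<tau> * c"
        using \<tau> by (simp add: mult.assoc[symmetric] powr_add[symmetric])
      finally show ?thesis .
    qed
    ultimately show "\<exists>y. (L has_real_derivative y) (at \<tau>) \<and> y \<le> 0"
      by auto
  next
    show "continuous_on {\<alpha>..1} L"
      unfolding L_def using assms
      by (intro continuous_intros continuous_on_compose2[OF continuous_on_primF[OF cont]]) auto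
  qed
  then show ?thesis
    by (simp add: L_def c_def algebra_simps add_divide_distrib diff_divide_distrib)
qed

end

lemma lborel_pair_dilate:
  fixes \<beta> :: real
  assumes "\<beta> \<noteq> 0"
  shows "(lborel :: (real \<times> real) measure) = density (distr lborel borel (\<lambda>p. \<beta> *\<^sub>R p)) (\<lambda>_. ennreal (\<beta>\<^sup>2))"
  using lborel_affine[OF assms, of "0 :: real \<times> real"] by (simp add: power2_eq_square)

lemma nn_integral_lborel_pair_dilate:
  fixes g :: "real \<times> real \<Rightarrow> ennreal"
  assumes "\<beta> \<noteq> 0" and "g \<in> borel_measurable (lborel \<Otimes>\<^sub>M lborel)"
  shows "(\<integral>\<^sup>+p. g p \<partial>(lborel \<Otimes>\<^sub>M lborel))
    = ennreal (\<beta>\<^sup>2) * (\<integral>\<^sup>+p. g (\<beta> * fst p, \<beta> * snd p) \<partial>(lborel \<Otimes>\<^sub>M lborel))"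
  using assms(2) unfolding lborel_prod
  by (subst lborel_pair_dilate[OF assms(1)])
    (simp add: nn_integral_density nn_integral_distr nn_integral_cmult scaleR_prod_def case_prod_beta)

lemma integral_lborel_pair_dilate:
  fixes g :: "real \<times> real \<Rightarrow> real"
  assumes "\<beta> \<noteq> 0" and "g \<in> borel_measurable (lborel \<Otimes>\<^sub>M lborel)"
  shows "(\<integral>p. g p \<partial>(lborel \<Otimes>\<^sub>M lborel))
    = \<beta>\<^sup>2 * (\<integral>p. g (\<beta> * fst p, \<beta> * snd p) \<partial>(lborel \<Otimes>\<^sub>M lborel))"
  using assms(2) unfolding lborel_prod
  by (subst lborel_pair_dilate[OF assms(1)])
    (simp add: integral_density integral_distr scaleR_prod_def case_prod_beta)

lemma gagl_nn_dilate:
  assumes "0 < \<beta>" and [measurable]: "u \<in> borel_measurable borel"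
  shows "gagl_nn (\<lambda>x. \<alpha> * u (\<beta> * x)) = ennreal (\<alpha>\<^sup>2) * gagl_nn u"
proof -
  have "gagl_nn u = ennreal (\<beta>\<^sup>2) *
      (\<integral>\<^sup>+p. ennreal ((u (\<beta> * fst p) - u (\<beta> * snd p))\<^sup>2 / (\<beta> * fst p - \<beta> * snd p)\<^sup>2) \<partial>(lborel \<Otimes>\<^sub>M lborel))"
    unfolding gagl_nn_def using assms(1) by (subst nn_integral_lborel_pair_dilate) auto
  also have "\<dots> = (\<integral>\<^sup>+p. ennreal ((u (\<beta> * fst p) - u (\<beta> * snd p))\<^sup>2 / (fst p - snd p)\<^sup>2) \<partial>(lborel \<Otimes>\<^sub>M lborel))"
    using assms(1)
    by (simp add: right_diff_distrib[symmetric] power_mult_distrib ennreal_mult'[symmetric]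
        nn_integral_cmult[symmetric] del: ennreal_mult')
  finally have "gagl_nn u = (\<integral>\<^sup>+p. ennreal ((u (\<beta> * fst p) - u (\<beta> * snd p))\<^sup>2 / (fst p - snd p)\<^sup>2) \<partial>(lborel \<Otimes>\<^sub>M lborel))" .
  moreover have "(\<lambda>p. ennreal ((\<alpha> * u (\<beta> * fst p) - \<alpha> * u (\<beta> * snd p))\<^sup>2 / (fst p - snd p)\<^sup>2))
      = (\<lambda>p. ennreal (\<alpha>\<^sup>2) * ennreal ((u (\<beta> * fst p) - u (\<beta> * snd p))\<^sup>2 / (fst p - snd p)\<^sup>2))"
    by (simp add: right_diff_distrib[symmetric] power_mult_distrib ennreal_mult[symmetric])
  ultimately show ?thesis
    unfolding gagl_nn_def by (simp add: nn_integral_cmult)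
qed

lemma frac_seminorm_sq_dilate:
  assumes "0 < \<beta>" and [measurable]: "u \<in> borel_measurable borel"
  shows "frac_seminorm_sq (\<lambda>x. \<alpha> * u (\<beta> * x)) = \<alpha>\<^sup>2 * frac_seminorm_sq u"
proof -
  have "(\<integral>p. (u (fst p) - u (snd p))\<^sup>2 / (fst p - snd p)\<^sup>2 \<partial>(lborel \<Otimes>\<^sub>M lborel))
      = \<beta>\<^sup>2 * (\<integral>p. 1 / \<beta>\<^sup>2 * ((u (\<beta> * fst p) - u (\<beta> * snd p))\<^sup>2 / (fst p - snd p)\<^sup>2) \<partial>(lborel \<Otimes>\<^sub>M lborel))"
    using assms(1) by (subst integral_lborel_pair_dilate)
      (auto simp: right_diff_distrib[symmetric] power_mult_distrib)
  also have "\<dots> = (\<integral>p. (u (\<beta> * fst p) - u (\<beta> * snd p))\<^sup>2 / (fst p - snd p)\<^sup>2 \<partial>(lborel \<Otimes>\<^sub>M lborel))"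
    using assms(1) by (simp only: integral_mult_right_zero) simp
  finally have "(\<integral>p. (u (fst p) - u (snd p))\<^sup>2 / (fst p - snd p)\<^sup>2 \<partial>(lborel \<Otimes>\<^sub>M lborel))
      = (\<integral>p. (u (\<beta> * fst p) - u (\<beta> * snd p))\<^sup>2 / (fst p - snd p)\<^sup>2 \<partial>(lborel \<Otimes>\<^sub>M lborel))" .
  moreover have "(\<lambda>p. (\<alpha> * u (\<beta> * fst p) - \<alpha> * u (\<beta> * snd p))\<^sup>2 / (fst p - snd p)\<^sup>2)
      = (\<lambda>p. \<alpha>\<^sup>2 * ((u (\<beta> * fst p) - u (\<beta> * snd p))\<^sup>2 / (fst p - snd p)\<^sup>2))"
    by (simp add: right_diff_distrib[symmetric] power_mult_distrib)
  ultimately show ?thesis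
    unfolding frac_seminorm_sq_def by (simp only: integral_mult_right_zero) simp
qed

lemma H_half_dilate:
  assumes "u \<in> H_half" "0 < \<beta>"
  shows "(\<lambda>x. \<alpha> * u (\<beta> * x)) \<in> H_half"
proof -
  have [measurable]: "u \<in> borel_measurable borel"
    using assms(1) by (simp add: H_half_def)
  have "integrable lborel (\<lambda>x. (u (\<beta> * x))\<^sup>2)"
    using assms lborel_integrable_real_affine_iff[of \<beta> "\<lambda>x. (u x)\<^sup>2" 0] by (simp add: H_half_def)
  then have "integrable lborel (\<lambda>x. (\<alpha> * u (\<beta> * x))\<^sup>2)"
    by (simp add: power_mult_distrib)
  moreover have "gagl_nn (\<lambda>x. \<alpha> * u (\<beta> * x)) < \<infinity>"
    using assms by (simp add: gagl_nn_dilate H_half_def ennreal_mult_less_top)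
  ultimately show ?thesis
    by (simp add: H_half_def)
qed

lemma L2_integral_dilate:
  fixes u :: "real \<Rightarrow> real"
  assumes "0 < \<beta>"
  shows "(LINT x|lborel. (\<alpha> * u (\<beta> * x))\<^sup>2) = \<alpha>\<^sup>2 / \<beta> * (LINT x|lborel. (u x)\<^sup>2)"
  using assms lborel_integral_real_affine[of \<beta> "\<lambda>x. (u x)\<^sup>2" 0]
  by (simp add: power_mult_distrib)

lemma dilate_mem_sphere_S:
  assumes "u \<in> sphere_S a" "0 < \<alpha>" "0 < a" "0 < b"
  shows "(\<lambda>x. \<alpha> * u ((\<alpha> * a / b)\<^sup>2 * x)) \<in> sphere_S b"
proof -
  have \<beta>: "0 < (\<alpha> * a / b)\<^sup>2"
    using assms by simp
  have "\<alpha>\<^sup>2 / (\<alpha> * a / b)\<^sup>2 * a\<^sup>2 = b\<^sup>2"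
    using assms by (simp add: power_divide power_mult_distrib)
  then show ?thesis
    using assms(1) by (simp add: sphere_S_def H_half_dilate[OF _ \<beta>] L2_integral_dilate[OF \<beta>])
qed

lemma frac_seminorm_sq_pos:
  assumes "u \<in> H_half" and "(LINT x|lborel. (u x)\<^sup>2) \<noteq> 0"
  shows "0 < frac_seminorm_sq u"
proof -
  have [measurable]: "u \<in> borel_measurable borel"
    using assms(1) by (simp add: H_half_def)
  define h where "h p = (u (fst p) - u (snd p))\<^sup>2 / (fst p - snd p)\<^sup>2" for p :: "real \<times> real"
  have [measurable]: "h \<in> borel_measurable (lborel \<Otimes>\<^sub>M lborel)"
    unfolding h_def by measurable
  have "integrable (lborel \<Otimes>\<^sub>M lborel) h"
    using assms(1) by (intro integrableI_nonneg) (auto simp: H_half_def gagl_nn_def h_def)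
  moreover have "\<not> (AE p in lborel \<Otimes>\<^sub>M lborel. h p = 0)"
  proof
    assume "AE p in lborel \<Otimes>\<^sub>M lborel. h p = 0"
    moreover have "AE p in lborel \<Otimes>\<^sub>M lborel. fst p \<noteq> snd p"
    proof (rule lborel_pair.AE_pair_measure)
      show "{p \<in> space (lborel \<Otimes>\<^sub>M lborel). fst p \<noteq> snd p} \<in> sets (lborel \<Otimes>\<^sub>M lborel)"
        by measurable
      show "AE x in lborel. AE y in lborel. fst (x, y) \<noteq> snd (x, y)"
        using AE_lborel_singleton by (force elim: AE_mp)
    qed
    ultimately have "AE p in lborel \<Otimes>\<^sub>M lborel. u (fst p) = u (snd p)"
      by eventually_elim (simp add: h_def)
    then have "AE x in lborel. AE y in lborel. u x = u y"
      using lborel_pair.AE_pair by fastforce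
    moreover have "ae_filter (lborel :: real measure) \<noteq> bot"
      by (simp add: ae_filter_eq_bot_iff)
    ultimately obtain x0 where "AE y in lborel. u x0 = u y"
      using eventually_happens' by blast
    then have "(LINT y|lborel. (u y)\<^sup>2) = (LINT y::real|lborel. (u x0)\<^sup>2)"
      by (intro integral_cong_AE) (auto elim: AE_mp)
    with assms(2) show False
      by (simp add: measure_def)
  qed
  ultimately have "integral\<^sup>L (lborel \<Otimes>\<^sub>M lborel) h \<noteq> 0"
    by (subst integral_nonneg_eq_0_iff_AE) (auto simp: h_def)
  moreover have "0 \<le> integral\<^sup>L (lborel \<Otimes>\<^sub>M lborel) h"
    by (auto intro!: integral_nonneg_AE simp: h_def)
  ultimately have "0 < integral\<^sup>L (lborel \<Otimes>\<^sub>M lborel) h"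
    by linarith
  then show ?thesis
    by (simp add: frac_seminorm_sq_def h_def[abs_def])
qed

lemma continuous_on_integral_dominated:
  fixes h :: "real \<Rightarrow> 'a \<Rightarrow> real"
  assumes "\<And>\<alpha>. \<alpha> \<in> S \<Longrightarrow> h \<alpha> \<in> borel_measurable M" and "integrable M w"
    and "\<And>\<alpha> x. \<alpha> \<in> S \<Longrightarrow> x \<in> space M \<Longrightarrow> \<bar>h \<alpha> x\<bar> \<le> w x"
    and "\<And>x. x \<in> space M \<Longrightarrow> continuous_on S (\<lambda>\<alpha>. h \<alpha> x)"
  shows "continuous_on S (\<lambda>\<alpha>. integral\<^sup>L M (h \<alpha>))"
proof (rule continuous_on_sequentiallyI)
  fix X :: "nat \<Rightarrow> real" and a
  assume X: "\<forall>n. X n \<in> S" "a \<in> S" "X \<longlonglongrightarrow> a"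
  show "(\<lambda>n. integral\<^sup>L M (h (X n))) \<longlonglongrightarrow> integral\<^sup>L M (h a)"
  proof (rule integral_dominated_convergence[where w=w])
    show "AE x in M. (\<lambda>n. h (X n) x) \<longlonglongrightarrow> h a x"
      using X assms(4) unfolding continuous_on_sequentially by (auto simp: o_def)
  qed (use assms X in auto)
qed

definition choq_kernel :: "real \<Rightarrow> (real \<Rightarrow> real) \<Rightarrow> (real \<Rightarrow> real) \<Rightarrow> real \<times> real \<Rightarrow> real" where
  "choq_kernel \<mu> G H p = G (snd p) * H (fst p) / \<bar>fst p - snd p\<bar> powr \<mu>"

lemma choq_term_eq_integral: "choq_term \<mu> G H = integral\<^sup>L (lborel \<Otimes>\<^sub>M lborel) (choq_kernel \<mu> G H)"
  by (simp add: choq_term_def choq_kernel_def[abs_def])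

lemma borel_measurable_choq_kernel [measurable]:
  assumes [measurable]: "G \<in> borel_measurable borel" "H \<in> borel_measurable borel"
  shows "choq_kernel \<mu> G H \<in> borel_measurable (lborel \<Otimes>\<^sub>M lborel)"
  unfolding choq_kernel_def[abs_def] by measurable

lemma choq_kernel_nonneg:
  "(\<And>t. 0 \<le> G t) \<Longrightarrow> (\<And>t. 0 \<le> H t) \<Longrightarrow> 0 \<le> choq_kernel \<mu> G H p"
  by (simp add: choq_kernel_def)

lemma choq_term_nonneg:
  "(\<And>t. 0 \<le> G t) \<Longrightarrow> (\<And>t. 0 \<le> H t) \<Longrightarrow> 0 \<le> choq_term \<mu> G H"
  by (simp add: choq_term_eq_integral choq_kernel_nonneg integral_nonneg_AE)

lemma choq_kernel_add_cmult_right: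
  "choq_kernel \<mu> G (\<lambda>t. H t + c * K t) = (\<lambda>p. choq_kernel \<mu> G H p + c * choq_kernel \<mu> G K p)"
  by (simp add: fun_eq_iff choq_kernel_def distrib_left add_divide_distrib)

lemma integrable_choq_kernel_dominated:
  assumes "integrable (lborel \<Otimes>\<^sub>M lborel) (choq_kernel \<mu> G H)"
    and [measurable]: "G' \<in> borel_measurable borel" "H' \<in> borel_measurable borel"
    and "\<And>s t. \<bar>G' s * H' t\<bar> \<le> G s * H t"
  shows "integrable (lborel \<Otimes>\<^sub>M lborel) (choq_kernel \<mu> G' H')"
proof (rule Bochner_Integration.integrable_bound[OF assms(1)])
  have "\<bar>G' s * H' t\<bar> \<le> \<bar>G s * H t\<bar>" for s t
    using assms(4)[of s t] by linarith
  then show "AE p in lborel \<Otimes>\<^sub>M lborel. norm (choq_kernel \<mu> G' H' p) \<le> norm (choq_kernel \<mu> G H p)"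
    by (intro AE_I2) (simp add: choq_kernel_def abs_divide divide_right_mono)
qed measurable

lemma choq_kernel_commute: "choq_kernel \<mu> H G = (\<lambda>(x, y). choq_kernel \<mu> G H (y, x))"
  by (auto simp: choq_kernel_def abs_minus_commute)

lemma integrable_choq_kernel_commute:
  "integrable (lborel \<Otimes>\<^sub>M lborel) (choq_kernel \<mu> H G) \<longleftrightarrow> integrable (lborel \<Otimes>\<^sub>M lborel) (choq_kernel \<mu> G H)"
  unfolding choq_kernel_commute[of \<mu> H] by (rule lborel_pair.integrable_product_swap_iff)

lemma choq_term_commute:
  assumes [measurable]: "G \<in> borel_measurable borel" "H \<in> borel_measurable borel"
  shows "choq_term \<mu> H G = choq_term \<mu> G H"
  unfolding choq_term_eq_integral choq_kernel_commute[of \<mu> H]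
  by (rule lborel_pair.integral_product_swap) measurable

lemma choq_term_dilate:
  assumes "0 < \<beta>" and [measurable]: "G \<in> borel_measurable borel" "H \<in> borel_measurable borel"
  shows "choq_term \<mu> (\<lambda>x. G (\<beta> * x)) (\<lambda>x. H (\<beta> * x)) = \<beta> powr (\<mu> - 2) * choq_term \<mu> G H"
proof -
  have dist: "\<bar>\<beta> * x - \<beta> * y\<bar> powr \<mu> = \<beta> powr \<mu> * \<bar>x - y\<bar> powr \<mu>" for x y
    using assms(1) by (simp add: right_diff_distrib[symmetric] abs_mult powr_mult)
  have kernel: "choq_kernel \<mu> G H (\<beta> * x, \<beta> * y)
      = \<beta> powr (- \<mu>) * choq_kernel \<mu> (\<lambda>x. G (\<beta> * x)) (\<lambda>x. H (\<beta> * x)) (x, y)" for x y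
    unfolding choq_kernel_def fst_conv snd_conv dist powr_minus
    by (simp add: divide_inverse mult.commute mult.left_commute)
  have "choq_term \<mu> G H = \<beta>\<^sup>2 * (\<integral>p. \<beta> powr (- \<mu>) * choq_kernel \<mu> (\<lambda>x. G (\<beta> * x)) (\<lambda>x. H (\<beta> * x)) p \<partial>(lborel \<Otimes>\<^sub>M lborel))"
    unfolding choq_term_eq_integral using assms(1)
    by (subst integral_lborel_pair_dilate[of \<beta>]) (simp_all add: kernel)
  also have "\<dots> = \<beta>\<^sup>2 * \<beta> powr (- \<mu>) * choq_term \<mu> (\<lambda>x. G (\<beta> * x)) (\<lambda>x. H (\<beta> * x))"
    by (simp add: choq_term_eq_integral)
  finally have "choq_term \<mu> G H = \<beta> powr (2 - \<mu>) * choq_term \<mu> (\<lambda>x. G (\<beta> * x)) (\<lambda>x. H (\<beta> * x))"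
    using assms(1) by (simp add: powr_diff powr_minus divide_inverse)
  then show ?thesis
    using assms(1) by (simp add: powr_diff)
qed

locale pohozaev_element = choquard_nonlinearity +
  fixes a :: real and u :: "real \<Rightarrow> real"
  assumes a_pos: "0 < a" and mem_pohozaev_set: "u \<in> pohozaev_set \<mu> f a"
begin

definition choq_F_F :: "real \<Rightarrow> real" where
  "choq_F_F \<alpha> = choq_term \<mu> (\<lambda>x. primF f (\<alpha> * u x)) (\<lambda>x. primF f (\<alpha> * u x))"

definition choq_F_tildeF :: "real \<Rightarrow> real" where
  "choq_F_tildeF \<alpha> = choq_term \<mu> (\<lambda>x. primF f (\<alpha> * u x)) (\<lambda>x. tilde_primF \<mu> f (\<alpha> * u x))"

lemma mem_sphere_S: "u \<in> sphere_S a"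
  and H_half: "u \<in> H_half"
  and L2_integral: "(LINT x|lborel. (u x)\<^sup>2) = a\<^sup>2"
  and pohozaev_identity: "P_fun \<mu> f u = 0"
  using mem_pohozaev_set by (auto simp: pohozaev_set_def sphere_S_def)

lemma borel_measurable_u [measurable]: "u \<in> borel_measurable borel"
  using H_half by (simp add: H_half_def)

lemma seminorm_pos: "0 < frac_seminorm_sq u"
  using frac_seminorm_sq_pos[OF H_half] L2_integral a_pos by simp

lemma choq_F_F_nonneg: "0 \<le> choq_F_F \<alpha>"
  unfolding choq_F_F_def by (intro choq_term_nonneg primF_nonneg)

lemma integrable_choq_kernel_f_mult:
  "integrable (lborel \<Otimes>\<^sub>M lborel) (choq_kernel \<mu> (\<lambda>x. primF f (u x)) (\<lambda>x. f (u x) * u x))"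
proof (rule ccontr)
  \<comment> \<open>a non-integrable kernel has Bochner integral 0, and then P(u) = 0 forces the seminorm to vanish\<close>
  assume "\<not> ?thesis"
  then have "choq_term \<mu> (\<lambda>x. primF f (u x)) (\<lambda>x. f (u x) * u x) = 0"
    by (simp add: choq_term_eq_integral not_integrable_integral_eq)
  then have "frac_seminorm_sq u + (2 - \<mu>) * choq_F_F 1 = 0"
    using pohozaev_identity by (simp add: P_fun_def choq_F_F_def)
  moreover have "0 \<le> (2 - \<mu>) * choq_F_F 1"
    using mu_less_2 choq_F_F_nonneg by simp
  ultimately show False
    using seminorm_pos by linarith
qed

lemma integrable_choq_kernel_dilate:
  assumes "0 < \<alpha>" "\<alpha> \<le> 1" and [measurable]: "h \<in> borel_measurable borel"
    and "\<And>t. 0 \<le> h (\<alpha> * t)" "\<And>t. h (\<alpha> * t) \<le> f t * t"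
  shows "integrable (lborel \<Otimes>\<^sub>M lborel) (choq_kernel \<mu> (\<lambda>x. primF f (\<alpha> * u x)) (\<lambda>x. h (\<alpha> * u x)))"
proof (rule integrable_choq_kernel_dominated[OF integrable_choq_kernel_f_mult])
  show "\<bar>primF f (\<alpha> * u s) * h (\<alpha> * u t)\<bar> \<le> primF f (u s) * (f (u t) * u t)" for s t
    using assms(4,5) primF_dilate_le_self[OF assms(1,2)]
    by (simp add: abs_mult primF_nonneg mult_mono)
qed measurable

lemma integrable_choq_kernel_F_F:
  "0 < \<alpha> \<Longrightarrow> \<alpha> \<le> 1 \<Longrightarrow>
    integrable (lborel \<Otimes>\<^sub>M lborel) (choq_kernel \<mu> (\<lambda>x. primF f (\<alpha> * u x)) (\<lambda>x. primF f (\<alpha> * u x)))"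
  by (rule integrable_choq_kernel_dilate)
    (auto intro: order_trans[OF primF_dilate_le_self primF_le_f_mult] primF_nonneg)

lemma integrable_choq_kernel_F_tildeF:
  "0 < \<alpha> \<Longrightarrow> \<alpha> \<le> 1 \<Longrightarrow>
    integrable (lborel \<Otimes>\<^sub>M lborel) (choq_kernel \<mu> (\<lambda>x. primF f (\<alpha> * u x)) (\<lambda>x. tilde_primF \<mu> f (\<alpha> * u x)))"
  by (rule integrable_choq_kernel_dilate)
    (auto intro: order_trans[OF tilde_primF_dilate_le_self tilde_primF_le] tilde_primF_nonneg)

lemma choq_term_f_mult_dilate:
  assumes "0 < \<alpha>" "\<alpha> \<le> 1"
  shows "choq_term \<mu> (\<lambda>x. primF f (\<alpha> * u x)) (\<lambda>x. f (\<alpha> * u x) * (\<alpha> * u x))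
    = choq_F_tildeF \<alpha> + (2 - \<mu>) * choq_F_F \<alpha>"
proof -
  have "(\<lambda>x. f (\<alpha> * u x) * (\<alpha> * u x)) = (\<lambda>x. tilde_primF \<mu> f (\<alpha> * u x) + (2 - \<mu>) * primF f (\<alpha> * u x))"
    by (simp add: tilde_primF_def)
  then show ?thesis
    using integrable_choq_kernel_F_F[OF assms] integrable_choq_kernel_F_tildeF[OF assms]
    by (simp add: choq_term_eq_integral choq_F_F_def choq_F_tildeF_def choq_kernel_add_cmult_right)
qed

lemma choq_F_tildeF_1: "choq_F_tildeF 1 = frac_seminorm_sq u"
  using pohozaev_identity choq_term_f_mult_dilate[of 1] by (simp add: P_fun_def choq_F_F_def)

lemma P_fun_dilate:
  assumes "0 < \<alpha>" "\<alpha> \<le> 1" "0 < \<beta>"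
  shows "P_fun \<mu> f (\<lambda>x. \<alpha> * u (\<beta> * x)) = \<alpha>\<^sup>2 * frac_seminorm_sq u - \<beta> powr (\<mu> - 2) * choq_F_tildeF \<alpha>"
proof -
  have "choq_term \<mu> (\<lambda>x. primF f (\<alpha> * u (\<beta> * x))) (\<lambda>x. primF f (\<alpha> * u (\<beta> * x)))
      = \<beta> powr (\<mu> - 2) * choq_F_F \<alpha>"
    unfolding choq_F_F_def
    by (rule choq_term_dilate[OF assms(3), of "\<lambda>x. primF f (\<alpha> * u x)" "\<lambda>x. primF f (\<alpha> * u x)"]) simp_all
  moreover have "choq_term \<mu> (\<lambda>x. primF f (\<alpha> * u (\<beta> * x))) (\<lambda>x. f (\<alpha> * u (\<beta> * x)) * (\<alpha> * u (\<beta> * x)))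
      = \<beta> powr (\<mu> - 2) * (choq_F_tildeF \<alpha> + (2 - \<mu>) * choq_F_F \<alpha>)"
    unfolding choq_term_f_mult_dilate[OF assms(1,2), symmetric]
    by (rule choq_term_dilate[OF assms(3), of "\<lambda>x. primF f (\<alpha> * u x)" "\<lambda>x. f (\<alpha> * u x) * (\<alpha> * u x)"]) simp_all
  ultimately show ?thesis
    unfolding P_fun_def frac_seminorm_sq_dilate[OF assms(3) borel_measurable_u] by (simp add: algebra_simps)
qed

lemma J_fun_dilate:
  assumes "0 < \<beta>"
  shows "J_fun \<mu> f (\<lambda>x. \<alpha> * u (\<beta> * x)) = \<alpha>\<^sup>2 * frac_seminorm_sq u / 2 - \<beta> powr (\<mu> - 2) * choq_F_F \<alpha> / 2"
  using choq_term_dilate[OF assms, of "\<lambda>x. primF f (\<alpha> * u x)" "\<lambda>x. primF f (\<alpha> * u x)" \<mu>]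
    frac_seminorm_sq_dilate[OF assms borel_measurable_u]
  by (simp add: J_fun_def choq_F_F_def)

lemma choq_F_tildeF_le:
  assumes "0 < \<alpha>" "\<alpha> \<le> 1"
  shows "choq_F_tildeF \<alpha> \<le> \<alpha> powr (\<theta> + (3 - \<mu>)) * frac_seminorm_sq u"
proof -
  have "choq_kernel \<mu> (\<lambda>x. primF f (\<alpha> * u x)) (\<lambda>x. tilde_primF \<mu> f (\<alpha> * u x)) p
      \<le> \<alpha> powr (\<theta> + (3 - \<mu>)) * choq_kernel \<mu> (\<lambda>x. primF f (u x)) (\<lambda>x. tilde_primF \<mu> f (u x)) p" for p
  proof -
    have "primF f (\<alpha> * u (snd p)) * tilde_primF \<mu> f (\<alpha> * u (fst p))
        \<le> (\<alpha> powr \<theta> * primF f (u (snd p))) * (\<alpha> powr (3 - \<mu>) * tilde_primF \<mu> f (u (fst p)))"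
      by (intro mult_mono primF_dilate_le[OF assms] tilde_primF_dilate_le[OF assms])
        (simp_all add: primF_nonneg tilde_primF_nonneg)
    then show ?thesis
      by (simp add: choq_kernel_def powr_add divide_right_mono mult_ac)
  qed
  then have "choq_F_tildeF \<alpha> \<le> \<alpha> powr (\<theta> + (3 - \<mu>)) * choq_F_tildeF 1"
    unfolding choq_F_tildeF_def choq_term_eq_integral
    using integrable_choq_kernel_F_tildeF[OF assms] integrable_choq_kernel_F_tildeF[of 1]
    by (subst integral_mult_right_zero[symmetric]) (intro integral_mono; simp)
  then show ?thesis
    by (simp add: choq_F_tildeF_1)
qed

lemma continuous_on_choq_F_tildeF:
  assumes "0 < \<epsilon>"
  shows "continuous_on {\<epsilon>..1} choq_F_tildeF"
  unfolding choq_F_tildeF_def[abs_def] choq_term_eq_integral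
proof (rule continuous_on_integral_dominated[OF _ integrable_choq_kernel_f_mult])
  show "\<bar>choq_kernel \<mu> (\<lambda>x. primF f (\<alpha> * u x)) (\<lambda>x. tilde_primF \<mu> f (\<alpha> * u x)) p\<bar>
      \<le> choq_kernel \<mu> (\<lambda>x. primF f (u x)) (\<lambda>x. f (u x) * u x) p" if "\<alpha> \<in> {\<epsilon>..1}" for \<alpha> p
  proof -
    have \<alpha>: "0 < \<alpha>" "\<alpha> \<le> 1"
      using that assms by auto
    have "primF f (\<alpha> * u (snd p)) * tilde_primF \<mu> f (\<alpha> * u (fst p)) \<le> primF f (u (snd p)) * (f (u (fst p)) * u (fst p))"
      by (intro mult_mono primF_dilate_le_self[OF \<alpha>] order_trans[OF tilde_primF_dilate_le_self[OF \<alpha>] tilde_primF_le])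
        (simp_all add: primF_nonneg tilde_primF_nonneg f_mult_nonneg)
    then show ?thesis
      by (simp add: choq_kernel_def abs_mult primF_nonneg tilde_primF_nonneg divide_right_mono)
  qed
  show "continuous_on {\<epsilon>..1} (\<lambda>\<alpha>. choq_kernel \<mu> (\<lambda>x. primF f (\<alpha> * u x)) (\<lambda>x. tilde_primF \<mu> f (\<alpha> * u x)) p)" for p
    unfolding choq_kernel_def tilde_primF_def divide_inverse
    by (intro continuous_intros continuous_on_compose2[OF continuous_on_primF[OF cont]]
        continuous_on_compose2[OF cont]) auto
qed measurable

lemma choq_F_F_lower_bound:
  assumes "0 < \<alpha>" "\<alpha> \<le> 1"
  shows "choq_F_F 1 - (1 - \<alpha>\<^sup>2) * frac_seminorm_sq u \<le> \<alpha> powr (2 * \<mu> - 4) * choq_F_F \<alpha>"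
proof -
  define kFF where "kFF \<beta> = choq_kernel \<mu> (\<lambda>x. primF f (\<beta> * u x)) (\<lambda>x. primF f (\<beta> * u x))" for \<beta>
  define kFG where "kFG = choq_kernel \<mu> (\<lambda>x. primF f (u x)) (\<lambda>x. tilde_primF \<mu> f (u x))"
  define kGF where "kGF = choq_kernel \<mu> (\<lambda>x. tilde_primF \<mu> f (u x)) (\<lambda>x. primF f (u x))"
  have "0 \<le> \<alpha> powr (2 * \<mu> - 4) * kFF \<alpha> p - kFF 1 p + (1 - \<alpha>\<^sup>2) / 2 * (kFG p + kGF p)" for p
  proof -
    let ?t1 = "u (snd p)" and ?t2 = "u (fst p)"
    have "0 \<le> (\<alpha> powr (2 * \<mu> - 4) * (primF f (\<alpha> * ?t1) * primF f (\<alpha> * ?t2)) - primF f ?t1 * primF f ?t2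
        + (1 - \<alpha>\<^sup>2) / 2 * (tilde_primF \<mu> f ?t1 * primF f ?t2 + primF f ?t1 * tilde_primF \<mu> f ?t2))
        / \<bar>fst p - snd p\<bar> powr \<mu>"
      using primF_product_dilate_bound[OF assms] by simp
    also have "\<dots> = \<alpha> powr (2 * \<mu> - 4) * kFF \<alpha> p - kFF 1 p + (1 - \<alpha>\<^sup>2) / 2 * (kGF p + kFG p)"
      by (simp add: kFF_def kFG_def kGF_def choq_kernel_def add_divide_distrib diff_divide_distrib distrib_left)
    finally show ?thesis
      by (simp add: add.commute)
  qed
  then have "0 \<le> integral\<^sup>L (lborel \<Otimes>\<^sub>M lborel)
      (\<lambda>p. \<alpha> powr (2 * \<mu> - 4) * kFF \<alpha> p - kFF 1 p + (1 - \<alpha>\<^sup>2) / 2 * (kFG p + kGF p))"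
    by (simp add: integral_nonneg_AE)
  also have "\<dots> = \<alpha> powr (2 * \<mu> - 4) * choq_F_F \<alpha> - choq_F_F 1 + (1 - \<alpha>\<^sup>2) / 2 *
      (choq_F_tildeF 1 + choq_term \<mu> (\<lambda>x. tilde_primF \<mu> f (u x)) (\<lambda>x. primF f (u x)))"
    using integrable_choq_kernel_F_F[OF assms] integrable_choq_kernel_F_F[of 1] integrable_choq_kernel_F_tildeF[of 1]
      integrable_choq_kernel_commute[of \<mu> "\<lambda>x. tilde_primF \<mu> f (u x)" "\<lambda>x. primF f (u x)"]
    by (simp add: kFF_def kFG_def kGF_def choq_F_F_def choq_F_tildeF_def choq_term_eq_integral)
  also have "choq_term \<mu> (\<lambda>x. tilde_primF \<mu> f (u x)) (\<lambda>x. primF f (u x)) = choq_F_tildeF 1"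
    by (simp add: choq_F_tildeF_def choq_term_commute)
  finally show ?thesis
    by (simp add: choq_F_tildeF_1 field_simps)
qed

lemma exists_dilation_choq_F_tildeF_le:
  assumes "1 \<le> K"
  shows "\<exists>\<epsilon>. 0 < \<epsilon> \<and> \<epsilon> \<le> 1 \<and> K * \<epsilon> powr (2 * \<mu> - 4) * choq_F_tildeF \<epsilon> \<le> \<epsilon>\<^sup>2 * frac_seminorm_sq u"
proof -
  define e where "e = \<theta> + \<mu> - 3"
  define \<epsilon> where "\<epsilon> = min 1 ((1 / K) powr (1 / e))"
  have e: "0 < e"
    using theta by (simp add: e_def)
  have \<epsilon>: "0 < \<epsilon>" "\<epsilon> \<le> 1"
    using assms by (auto simp: \<epsilon>_def)
  have "\<epsilon> powr e \<le> ((1 / K) powr (1 / e)) powr e"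
    using \<epsilon> e by (intro powr_mono2) (auto simp: \<epsilon>_def)
  also have "\<dots> = 1 / K"
    using e assms by (simp add: powr_powr)
  finally have K_\<epsilon>: "K * \<epsilon> powr e \<le> 1"
    using assms by (simp add: field_simps)
  have "(2 * \<mu> - 4) + (\<theta> + (3 - \<mu>)) = e + 2"
    by (simp add: e_def)
  then have "\<epsilon> powr (2 * \<mu> - 4) * \<epsilon> powr (\<theta> + (3 - \<mu>)) = \<epsilon> powr e * \<epsilon>\<^sup>2"
    using \<epsilon> by (simp only: powr_add[symmetric]) (simp add: powr_add powr_numeral)
  moreover have "K * \<epsilon> powr (2 * \<mu> - 4) * choq_F_tildeF \<epsilon>
      \<le> K * \<epsilon> powr (2 * \<mu> - 4) * (\<epsilon> powr (\<theta> + (3 - \<mu>)) * frac_seminorm_sq u)"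
    using choq_F_tildeF_le[OF \<epsilon>] assms by (intro mult_left_mono) simp_all
  moreover have "(K * \<epsilon> powr e) * (\<epsilon>\<^sup>2 * frac_seminorm_sq u) \<le> \<epsilon>\<^sup>2 * frac_seminorm_sq u"
    using K_\<epsilon> seminorm_pos assms by (intro mult_left_le_one_le) simp_all
  ultimately show ?thesis
    using \<epsilon> by (intro exI[of _ \<epsilon>]) (simp add: mult_ac)
qed

lemma exists_pohozaev_dilation:
  assumes "1 \<le> K"
  shows "\<exists>\<alpha>. 0 < \<alpha> \<and> \<alpha> \<le> 1 \<and> \<alpha>\<^sup>2 * frac_seminorm_sq u - K * \<alpha> powr (2 * \<mu> - 4) * choq_F_tildeF \<alpha> = 0"
proof -
  define \<phi> where "\<phi> \<alpha> = \<alpha>\<^sup>2 * frac_seminorm_sq u - K * \<alpha> powr (2 * \<mu> - 4) * choq_F_tildeF \<alpha>" for \<alpha>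
  obtain \<epsilon> where \<epsilon>: "0 < \<epsilon>" "\<epsilon> \<le> 1" and "0 \<le> \<phi> \<epsilon>"
    using exists_dilation_choq_F_tildeF_le[OF assms] by (auto simp: \<phi>_def)
  moreover have "\<phi> 1 \<le> 0"
    using assms seminorm_pos by (simp add: \<phi>_def choq_F_tildeF_1)
  moreover have "continuous_on {\<epsilon>..1} \<phi>"
    unfolding \<phi>_def using \<epsilon> continuous_on_choq_F_tildeF[OF \<epsilon>(1)] by (intro continuous_intros) auto
  ultimately obtain \<alpha> where "\<epsilon> \<le> \<alpha>" "\<alpha> \<le> 1" "\<phi> \<alpha> = 0"
    using IVT2'[of \<phi> 1 0 \<epsilon>] by blast
  then show ?thesis
    using \<epsilon> by (intro exI[of _ \<alpha>]) (simp add: \<phi>_def)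
qed

lemma exists_pohozaev_set_J_fun_le:
  assumes "a \<le> b"
  shows "\<exists>w \<in> pohozaev_set \<mu> f b. J_fun \<mu> f w \<le> J_fun \<mu> f u"
proof -
  define s where "s = frac_seminorm_sq u"
  define K where "K = (a / b) powr (2 * \<mu> - 4)"
  have "1 \<le> K"
    using powr_mono2'[of "2 * \<mu> - 4" "a / b" 1] a_pos assms mu_less_2 unfolding K_def by simp
  then obtain \<alpha> where \<alpha>: "0 < \<alpha>" "\<alpha> \<le> 1" and P0: "\<alpha>\<^sup>2 * s - K * \<alpha> powr (2 * \<mu> - 4) * choq_F_tildeF \<alpha> = 0"
    using exists_pohozaev_dilation unfolding s_def by blast
  define \<beta> where "\<beta> = (\<alpha> * a / b)\<^sup>2"
  have \<beta>: "0 < \<beta>"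
    using \<alpha> a_pos assms by (simp add: \<beta>_def)
  have \<beta>_powr: "\<beta> powr (\<mu> - 2) = K * \<alpha> powr (2 * \<mu> - 4)"
  proof -
    have "0 < \<alpha> * a / b"
      using \<alpha> a_pos assms by simp
    then have "\<beta> powr (\<mu> - 2) = ((\<alpha> * a / b) powr 2) powr (\<mu> - 2)"
      by (simp add: \<beta>_def powr_numeral)
    also have "\<dots> = (\<alpha> * (a / b)) powr (2 * \<mu> - 4)"
      by (simp add: powr_powr algebra_simps)
    also have "\<dots> = K * \<alpha> powr (2 * \<mu> - 4)"
      using \<alpha> a_pos assms by (subst powr_mult) (auto simp: K_def)
    finally show ?thesis .
  qed
  define w where "w = (\<lambda>x. \<alpha> * u (\<beta> * x))"
  have "w \<in> sphere_S b"
    using dilate_mem_sphere_S[OF mem_sphere_S \<alpha>(1) a_pos] a_pos assms by (simp add: w_def \<beta>_def)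
  moreover have "P_fun \<mu> f w = 0"
    using P_fun_dilate[OF \<alpha> \<beta>] P0 \<beta>_powr by (simp add: w_def s_def)
  moreover have "J_fun \<mu> f w \<le> J_fun \<mu> f u"
  proof -
    have "J_fun \<mu> f w = \<alpha>\<^sup>2 * s / 2 - K * (\<alpha> powr (2 * \<mu> - 4) * choq_F_F \<alpha>) / 2"
      using J_fun_dilate[OF \<beta>] \<beta>_powr by (simp add: w_def s_def mult.assoc)
    also have "\<dots> \<le> \<alpha>\<^sup>2 * s / 2 - \<alpha> powr (2 * \<mu> - 4) * choq_F_F \<alpha> / 2"
      using mult_right_mono[OF \<open>1 \<le> K\<close>, of "\<alpha> powr (2 * \<mu> - 4) * choq_F_F \<alpha>"] choq_F_F_nonneg[of \<alpha>]
      by simp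
    also have "\<dots> \<le> s / 2 - choq_F_F 1 / 2"
      using choq_F_F_lower_bound[OF \<alpha>] by (simp add: s_def algebra_simps)
    also have "\<dots> = J_fun \<mu> f u"
      using J_fun_dilate[of 1 1] by (simp add: s_def)
    finally show ?thesis .
  qed
  ultimately show ?thesis
    by (auto simp: pohozaev_set_def)
qed

end

lemma (in choquard_nonlinearity) m_level_antimono:
  assumes "0 < a" "a \<le> b"
  shows "m_level \<mu> f b \<le> m_level \<mu> f a"
  unfolding m_level_def
proof (rule INF_greatest)
  fix u assume "u \<in> pohozaev_set \<mu> f a"
  then interpret pohozaev_element \<mu> \<theta> f a u
    using assms(1) by unfold_locales
  obtain w where "w \<in> pohozaev_set \<mu> f b" "J_fun \<mu> f w \<le> J_fun \<mu> f u"
    using exists_pohozaev_set_J_fun_le[OF assms(2)] by blast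
  then show "(INF v \<in> pohozaev_set \<mu> f b. ereal (J_fun \<mu> f v)) \<le> ereal (J_fun \<mu> f u)"
    by (intro INF_lower2) auto
qed

theorem lemma5p1:
  fixes \<mu> :: real and f :: "real \<Rightarrow> real"
  assumes mu: "0 < \<mu>" "\<mu> < 1"
    and cont: "continuous_on UNIV f"
    and f1: "\<exists>\<kappa>>2 - \<mu>. ((\<lambda>t. \<bar>f t\<bar> / \<bar>t\<bar> powr \<kappa>) \<longlongrightarrow> 0) (at 0)"
    and f2a: "\<forall>\<alpha>>pi. ((\<lambda>t. \<bar>f t\<bar> * exp (- \<alpha> * t\<^sup>2)) \<longlongrightarrow> 0) at_infinity"
    and f2b: "\<forall>\<alpha>. 0 < \<alpha> \<and> \<alpha> < pi \<longrightarrow> filterlim (\<lambda>t. \<bar>f t\<bar> * exp (- \<alpha> * t\<^sup>2)) at_top at_infinity"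
    and f3: "\<exists>\<theta>>3 - \<mu>. \<forall>t. t \<noteq> 0 \<longrightarrow> 0 < \<theta> * primF f t \<and> \<theta> * primF f t \<le> t * f t"
    and f5: "\<forall>s t. s < t \<and> t < 0 \<longrightarrow>
               (f t * t - (2 - \<mu>) * primF f t) / \<bar>t\<bar> powr (3 - \<mu>)
                 \<le> (f s * s - (2 - \<mu>) * primF f s) / \<bar>s\<bar> powr (3 - \<mu>)"
            "\<forall>s t. 0 < s \<and> s < t \<longrightarrow>
               (f s * s - (2 - \<mu>) * primF f s) / \<bar>s\<bar> powr (3 - \<mu>)
                 \<le> (f t * t - (2 - \<mu>) * primF f t) / \<bar>t\<bar> powr (3 - \<mu>)"
  shows "\<forall>a b. 0 < a \<and> a \<le> b \<longrightarrow> m_level \<mu> f b \<le> m_level \<mu> f a"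
proof -
  obtain \<theta> where "3 - \<mu> < \<theta>" "\<forall>t. t \<noteq> 0 \<longrightarrow> 0 < \<theta> * primF f t \<and> \<theta> * primF f t \<le> t * f t"
    using f3 by auto
  then interpret choquard_nonlinearity \<mu> \<theta> f
    using mu cont f5 by unfold_locales (auto simp: tilde_primF_def)
  show ?thesis
    using m_level_antimono by blast
qed

end
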